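(* Every online algorithm for Ordered Open End Bin Packing (where $1$-items may occur) has absolute competitive ratio at least $2$.
   Context: Ordered Open End Bin Packing (online): items with sizes in $(0,1]$ arrive one by one (items of size at least $1$ are treated as having size exactly $1$ and are called $1$-items). Each item must be assigned irrevocably upon arrival, without knowledge of future items, to a bin whose current total size is strictly below $1$ (possibly a new, empty bin). The cost is the number of bins used. $\mathrm{OPT}(I)$ is the minimum number of bins in an offline packing of the sequence $I$ obeying the same rule (items are added to bins in the order of the sequence, and an item can be added to a bin only if the bin's current total size is strictly below $1$). The absolute competitive ratio of an algorithm $\mathrm{ALG}$ is $\sup_I \mathrm{ALG}(I)/\mathrm{OPT}(I)$ over all nonempty inputs $I$. *)

theory Defs
  imports Complex_Main "HOL-Library.Extended_Real"
begin

text \<open>Ordered Open End Bin Packing. An input is a list of item sizes in (0,1]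
(items of size at least 1 are represented by size exactly 1).
A packing assigns to item i (0-based) a bin index a i.\<close>

definition valid_input :: "real list \<Rightarrow> bool" where
  "valid_input xs \<longleftrightarrow> (\<forall>x\<in>set xs. 0 < x \<and> x \<le> 1)"

definition load :: "real list \<Rightarrow> (nat \<Rightarrow> nat) \<Rightarrow> nat \<Rightarrow> nat \<Rightarrow> real" where
  "load xs a i b = (\<Sum>j\<in>{j. j < i \<and> a j = b}. xs ! j)"

definition valid_packing :: "real list \<Rightarrow> (nat \<Rightarrow> nat) \<Rightarrow> bool" where
  "valid_packing xs a \<longleftrightarrow> (\<forall>i < length xs. load xs a i (a i) < 1)"

definition nbins :: "real list \<Rightarrow> (nat \<Rightarrow> nat) \<Rightarrow> nat" where
  "nbins xs a = card (a ` {..<length xs})"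

definition OPT :: "real list \<Rightarrow> nat" where
  "OPT xs = Min {nbins xs a | a. valid_packing xs a}"

text \<open>A deterministic online algorithm: the bin chosen for an item depends only
on the sequence of items seen so far (the last element being the current item).\<close>
type_synonym online_alg = "real list \<Rightarrow> nat"

definition alg_assign :: "online_alg \<Rightarrow> real list \<Rightarrow> nat \<Rightarrow> nat" where
  "alg_assign A xs i = A (take (Suc i) xs)"

definition is_online_alg :: "online_alg \<Rightarrow> bool" where
  "is_online_alg A \<longleftrightarrow> (\<forall>xs. valid_input xs \<longrightarrow> valid_packing xs (alg_assign A xs))"

definition ALG :: "online_alg \<Rightarrow> real list \<Rightarrow> nat" where
  "ALG A xs = nbins xs (alg_assign A xs)"

definition abs_comp_ratio :: "online_alg \<Rightarrow> ereal" where
  "abs_comp_ratio A =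
     (SUP xs \<in> {xs. xs \<noteq> [] \<and> valid_input xs}. ereal (real (ALG A xs) / real (OPT xs)))"

end

theory Submission
  imports Defs
begin

text \<open>The adversary presents triples \<open>\<epsilon>, 1 - \<epsilon>, 1\<close> with \<open>\<epsilon> = 1/(3k+1)\<close>.
As long as the algorithm puts each \<open>\<epsilon>\<close>-item into the bin of the following
\<open>(1 - \<epsilon>)\<close>-item, that bin reaches load 1 and the 1-item needs yet another bin; by induction
all bins used so far are closed, so every triple costs two fresh bins, \<open>2k\<close> in total. Offline,
all \<open>\<epsilon>\<close>-items share one bin and the last two items of each triple share another, giving
\<open>k + 1\<close> bins. If instead the algorithm separates the pair of triple \<open>j\<close>, both items
land in fresh bins, and stopping the input right there leaves \<open>2j + 2\<close> bins against an
optimum of \<open>j + 1\<close>. Hence the ratio is at least \<open>2k/(k+1)\<close> for every \<open>k\<close>.\<close>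

section \<open>Loads, packings and the offline optimum\<close>

lemma load_Suc:
  "load xs a (Suc i) b = load xs a i b + (if a i = b then xs ! i else 0)"
proof -
  have "{j. j < Suc i \<and> a j = b} =
      {j. j < i \<and> a j = b} \<union> (if a i = b then {i} else {})"
    by (auto simp: less_Suc_eq)
  then show ?thesis
    by (simp add: load_def)
qed

lemma load_nonneg:
  assumes "valid_input xs" "i \<le> length xs"
  shows "0 \<le> load xs a i b"
  using assms unfolding load_def valid_input_def
  by (intro sum_nonneg) (auto intro: less_imp_le)

lemma load_mono:
  assumes "valid_input xs" "i \<le> i'" "i' \<le> length xs"
  shows "load xs a i b \<le> load xs a i' b"
  using assms(2,3)
proof (induction i' rule: dec_induct)
  case (step i')
  have "0 \<le> xs ! i'"
    using assms(1) step.hyps(2) step.prems unfolding valid_input_def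
    by (auto intro: less_imp_le)
  then show ?case
    using step by (simp add: load_Suc)
qed simp

lemma load_Suc_ge_item:
  assumes "valid_input xs" "i < length xs"
  shows "xs ! i \<le> load xs a (Suc i) (a i)"
  using load_nonneg[OF assms(1), of i a "a i"] assms(2) by (simp add: load_Suc)

lemma closed_bin_not_reused:
  assumes "valid_packing xs a" "valid_input xs"
    and "1 \<le> load xs a i b" "i \<le> i'" "i' < length xs"
  shows "a i' \<noteq> b"
proof
  assume "a i' = b"
  then have "load xs a i' b < 1"
    using assms(1,5) unfolding valid_packing_def by blast
  moreover have "load xs a i b \<le> load xs a i' b"
    using assms(2,4,5) by (intro load_mono) auto
  ultimately show False
    using assms(3) by simp
qed

lemma valid_packing_one_per_bin: "valid_packing xs (\<lambda>i. i)"
  by (simp add: valid_packing_def load_def Collect_conv_if)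

lemma nbins_le_length: "nbins xs a \<le> length xs"
  unfolding nbins_def by (metis card_image_le card_lessThan finite_lessThan)

lemma finite_packing_sizes: "finite {nbins xs a | a. valid_packing xs a}"
  by (rule finite_subset[of _ "{..length xs}"]) (auto simp: nbins_le_length)

lemma OPT_le_nbins: "valid_packing xs a \<Longrightarrow> OPT xs \<le> nbins xs a"
  unfolding OPT_def using finite_packing_sizes by (intro Min_le) auto

lemma OPT_pos:
  assumes "xs \<noteq> []"
  shows "1 \<le> OPT xs"
proof -
  have "OPT xs \<in> {nbins xs a | a. valid_packing xs a}"
    unfolding OPT_def using finite_packing_sizes valid_packing_one_per_bin
    by (intro Min_in) auto
  then obtain a where "OPT xs = nbins xs a"
    by auto
  moreover have "a ` {..<length xs} \<noteq> {}"
    using assms by auto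
  ultimately show ?thesis
    unfolding nbins_def by (simp add: Suc_leI card_gt_0_iff)
qed

lemma ALG_take:
  assumes "m \<le> length xs"
  shows "ALG A (take m xs) = card (alg_assign A xs ` {..<m})"
proof -
  have "alg_assign A (take m xs) ` {..<m} = alg_assign A xs ` {..<m}"
    by (rule image_cong) (auto simp: alg_assign_def min_def)
  then show ?thesis
    using assms unfolding ALG_def nbins_def by (simp add: min_absorb2)
qed

lemma abs_comp_ratio_ge:
  fixes c :: real
  assumes "valid_input xs" "xs \<noteq> []" "c * OPT xs \<le> ALG A xs"
  shows "ereal c \<le> abs_comp_ratio A"
proof -
  have "c \<le> ALG A xs / OPT xs"
    using assms(3) OPT_pos[OF assms(2)] by (simp add: le_divide_eq)
  also have "ereal (ALG A xs / OPT xs) \<le> abs_comp_ratio A"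
    unfolding abs_comp_ratio_def using assms(1,2) by (intro SUP_upper) auto
  finally show ?thesis
    by simp
qed

lemma image_lessThan_3_Suc:
  "f ` {..<3 * Suc j} = insert (f (3 * j + 2)) (insert (f (3 * j + 1)) (insert (f (3 * j)) (f ` {..<3 * j})))"
proof -
  have "{..<3 * Suc j} = insert (3 * j + 2) (insert (3 * j + 1) (insert (3 * j) {..<3 * j}))"
    by auto
  then show ?thesis
    by simp
qed

section \<open>The adversary sequence\<close>

definition adversary_item :: "real \<Rightarrow> nat \<Rightarrow> real" where
  "adversary_item \<epsilon> i = (if i mod 3 = 0 then \<epsilon> else if i mod 3 = 1 then 1 - \<epsilon> else 1)"

definition adversary_input :: "real \<Rightarrow> nat \<Rightarrow> real list" where
  "adversary_input \<epsilon> n = map (adversary_item \<epsilon>) [0..<n]"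

lemma length_adversary_input [simp]: "length (adversary_input \<epsilon> n) = n"
  by (simp add: adversary_input_def)

lemma nth_adversary_input [simp]: "i < n \<Longrightarrow> adversary_input \<epsilon> n ! i = adversary_item \<epsilon> i"
  by (simp add: adversary_input_def)

lemma adversary_input_eq_Nil_iff [simp]: "adversary_input \<epsilon> n = [] \<longleftrightarrow> n = 0"
  by (simp add: adversary_input_def)

lemma take_adversary_input: "m \<le> n \<Longrightarrow> take m (adversary_input \<epsilon> n) = adversary_input \<epsilon> m"
  by (simp add: adversary_input_def take_map)

lemma valid_input_adversary_input:
  "0 < \<epsilon> \<Longrightarrow> \<epsilon> < 1 \<Longrightarrow> valid_input (adversary_input \<epsilon> n)"
  by (auto simp: valid_input_def adversary_input_def adversary_item_def)

lemma adversary_item_triple: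
  "adversary_item \<epsilon> (3 * l) = \<epsilon>"
  "adversary_item \<epsilon> (3 * l + 1) = 1 - \<epsilon>"
  "adversary_item \<epsilon> (3 * l + 2) = 1"
  by (simp_all add: adversary_item_def mod_Suc)

definition pairs_combined :: "(nat \<Rightarrow> nat) \<Rightarrow> nat \<Rightarrow> bool" where
  "pairs_combined a j \<longleftrightarrow> (\<forall>l<j. a (3 * l) = a (3 * l + 1))"

lemma pairs_combined_0 [simp]: "pairs_combined a 0"
  by (simp add: pairs_combined_def)

lemma pairs_combined_Suc [simp]:
  "pairs_combined a (Suc j) \<longleftrightarrow> pairs_combined a j \<and> a (3 * j) = a (3 * j + 1)"
  by (auto simp: pairs_combined_def less_Suc_eq)

lemma first_uncombined_pair:
  "\<not> pairs_combined a k \<Longrightarrow> \<exists>j<k. pairs_combined a j \<and> a (3 * j) \<noteq> a (3 * j + 1)"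
  by (induction k) (auto intro: less_SucI)

text \<open>Bin 0 takes every \<open>\<epsilon>\<close>-item and the last item; the open end also admits a
1-item on top of the \<open>1 - \<epsilon>\<close> of its triple.\<close>

definition opt_bin :: "nat \<Rightarrow> nat \<Rightarrow> nat" where
  "opt_bin n i = (if i mod 3 = 0 \<or> Suc i = n then 0 else Suc (i div 3))"

lemma valid_packing_opt_bin:
  assumes "0 < \<epsilon>" "\<epsilon> < 1" "n * \<epsilon> \<le> 1"
  shows "valid_packing (adversary_input \<epsilon> n) (opt_bin n)"
  unfolding valid_packing_def
proof (intro allI impI)
  fix i
  assume "i < length (adversary_input \<epsilon> n)"
  then have i: "i < n"
    by simp
  let ?xs = "adversary_input \<epsilon> n" and ?S = "\<lambda>b. {j. j < i \<and> opt_bin n j = b}"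
  show "load ?xs (opt_bin n) i (opt_bin n i) < 1"
  proof (cases "opt_bin n i")
    case 0
    have "?xs ! j = \<epsilon>" if "j \<in> ?S 0" for j
      using that i by (auto simp: opt_bin_def adversary_item_def split: if_splits)
    then have "load ?xs (opt_bin n) i 0 \<le> card (?S 0) * \<epsilon>"
      unfolding load_def by (intro sum_bounded_above) auto
    also have "\<dots> \<le> i * \<epsilon>"
      using \<open>0 < \<epsilon>\<close> by (intro mult_right_mono) (auto intro: card_mono[of "{..<i}", simplified])
    also have "\<dots> < n * \<epsilon>"
      using i \<open>0 < \<epsilon>\<close> by simp
    finally show ?thesis
      using 0 \<open>n * \<epsilon> \<le> 1\<close> by simp
  next
    case (Suc m)
    have S: "?S (Suc m) \<subseteq> {3 * m + 1}"
    proof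
      fix j
      assume "j \<in> ?S (Suc m)"
      then have "j < i" "j mod 3 \<noteq> 0" "j div 3 = m" "i mod 3 \<noteq> 0" "i div 3 = m"
        using Suc by (auto simp: opt_bin_def split: if_splits)
      then show "j \<in> {3 * m + 1}"
        by simp presburger
    qed
    have "?xs ! j = 1 - \<epsilon>" if "j \<in> ?S (Suc m)" for j
    proof -
      have "j = 3 * m + 1" "j < n"
        using that S i by auto
      then show ?thesis
        using adversary_item_triple(2) by simp
    qed
    then have "load ?xs (opt_bin n) i (Suc m) \<le> card (?S (Suc m)) * (1 - \<epsilon>)"
      unfolding load_def by (intro sum_bounded_above) auto
    also have "\<dots> \<le> 1 - \<epsilon>"
      using card_mono[OF _ S] \<open>\<epsilon> < 1\<close> by (simp add: mult_le_cancel_right1)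
    also have "\<dots> < 1"
      using \<open>0 < \<epsilon>\<close> by simp
    finally show ?thesis
      using Suc by simp
  qed
qed

lemma OPT_adversary_input_le:
  assumes "0 < \<epsilon>" "\<epsilon> < 1" "n * \<epsilon> \<le> 1"
  shows "OPT (adversary_input \<epsilon> n) \<le> n div 3 + 1"
proof -
  have "opt_bin n ` {..<n} \<subseteq> {..n div 3}"
    by (auto simp: opt_bin_def) presburger+
  then have "nbins (adversary_input \<epsilon> n) (opt_bin n) \<le> n div 3 + 1"
    unfolding nbins_def using card_mono[of "{..n div 3}"] by fastforce
  then show ?thesis
    using OPT_le_nbins[OF valid_packing_opt_bin[OF assms]] by linarith
qed

section \<open>Forcing the online algorithm to open two bins per triple\<close>

locale adversary_packing =
  fixes \<epsilon> :: real and n :: nat and a :: "nat \<Rightarrow> nat"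
  assumes eps_pos: "0 < \<epsilon>" and eps_less_1: "\<epsilon> < 1"
    and valid: "valid_packing (adversary_input \<epsilon> n) a"
begin

abbreviation xs :: "real list" where
  "xs \<equiv> adversary_input \<epsilon> n"

lemma valid_input_xs: "valid_input xs"
  using valid_input_adversary_input[OF eps_pos eps_less_1] .

lemmas closed_bin_stays_unused = closed_bin_not_reused[OF valid valid_input_xs]

lemma pair_closes_bin:
  assumes "a (3 * l) = a (3 * l + 1)" "3 * l + 2 \<le> n"
  shows "1 \<le> load xs a (3 * l + 2) (a (3 * l))"
proof -
  have "load xs a (3 * l + 2) (a (3 * l)) = load xs a (3 * l) (a (3 * l)) + \<epsilon> + (1 - \<epsilon>)"
    using assms adversary_item_triple(1,2) by (simp add: numeral_2_eq_2 load_Suc)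
  then show ?thesis
    using load_nonneg[OF valid_input_xs, of "3 * l" a] assms(2) by simp
qed

lemma unit_item_closes_bin:
  assumes "3 * l + 2 < n"
  shows "1 \<le> load xs a (3 * Suc l) (a (3 * l + 2))"
proof -
  have "1 = xs ! (3 * l + 2)"
    using assms adversary_item_triple(3) by simp
  also have "\<dots> \<le> load xs a (Suc (3 * l + 2)) (a (3 * l + 2))"
    using load_Suc_ge_item[OF valid_input_xs] assms by simp
  also have "Suc (3 * l + 2) = 3 * Suc l"
    by simp
  finally show ?thesis .
qed

lemma paired_prefix_bins_closed:
  assumes "3 * j \<le> n" "pairs_combined a j" "b \<in> a ` {..<3 * j}"
  shows "1 \<le> load xs a (3 * j) b"
  using assms
proof (induction j arbitrary: b)
  case (Suc j)
  have "a (3 * j + 1) = a (3 * j)"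
    using Suc.prems(2) by simp
  then consider "b \<in> a ` {..<3 * j}" | "b = a (3 * j)" | "b = a (3 * j + 2)"
    using Suc.prems(3) unfolding image_lessThan_3_Suc by blast
  then show ?case
  proof cases
    case 1
    then have "1 \<le> load xs a (3 * j) b"
      using Suc by simp
    then show ?thesis
      using load_mono[OF valid_input_xs, of "3 * j" "3 * Suc j" a b] Suc.prems(1) by simp
  next
    case 2
    then have "1 \<le> load xs a (3 * j + 2) b"
      using pair_closes_bin Suc.prems by simp
    then show ?thesis
      using load_mono[OF valid_input_xs, of "3 * j + 2" "3 * Suc j" a b] Suc.prems(1) by simp
  next
    case 3
    then show ?thesis
      using unit_item_closes_bin Suc.prems(1) by simp
  qed
qed simp

lemma bin_after_paired_prefix_fresh:
  assumes "3 * j \<le> i" "i < n" "pairs_combined a j"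
  shows "a i \<notin> a ` {..<3 * j}"
  using paired_prefix_bins_closed[of j] closed_bin_stays_unused[of "3 * j" _ i] assms by auto

lemma paired_prefix_card_bins:
  assumes "3 * j \<le> n" "pairs_combined a j"
  shows "2 * j \<le> card (a ` {..<3 * j})"
  using assms
proof (induction j)
  case (Suc j)
  let ?B = "a ` {..<3 * j}"
  have "a (3 * j + 1) = a (3 * j)"
    using Suc.prems(2) by simp
  then have image: "a ` {..<3 * Suc j} = insert (a (3 * j + 2)) (insert (a (3 * j)) ?B)"
    unfolding image_lessThan_3_Suc by simp
  have "a (3 * j) \<notin> ?B" "a (3 * j + 2) \<notin> ?B"
    using bin_after_paired_prefix_fresh Suc.prems by simp_all
  moreover have "a (3 * j + 2) \<noteq> a (3 * j)"
    using pair_closes_bin closed_bin_stays_unused[of "3 * j + 2" _ "3 * j + 2"] Suc.prems by simp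
  ultimately show ?case
    using image Suc by simp
qed simp

lemma unpaired_triple_opens_two_bins:
  assumes "3 * j + 2 \<le> n" "pairs_combined a j" "a (3 * j) \<noteq> a (3 * j + 1)"
  shows "2 * j + 2 \<le> card (a ` {..<3 * j + 2})"
proof -
  let ?B = "a ` {..<3 * j}"
  have "{..<3 * j + 2} = insert (3 * j + 1) (insert (3 * j) {..<3 * j})"
    by auto
  then have "a ` {..<3 * j + 2} = insert (a (3 * j + 1)) (insert (a (3 * j)) ?B)"
    by simp
  moreover have "a (3 * j) \<notin> ?B" "a (3 * j + 1) \<notin> ?B"
    using bin_after_paired_prefix_fresh assms(1,2) by simp_all
  ultimately show ?thesis
    using paired_prefix_card_bins[of j] assms by simp
qed

end

locale online_adversary =
  fixes A :: online_alg and k :: nat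
  assumes online: "is_online_alg A" and k_pos: "1 \<le> k"
begin

definition \<epsilon> :: real where
  "\<epsilon> = 1 / (3 * k + 1)"

definition bin :: "nat \<Rightarrow> nat" where
  "bin = alg_assign A (adversary_input \<epsilon> (3 * k))"

lemma eps_pos: "0 < \<epsilon>" and eps_less_1: "\<epsilon> < 1"
  using k_pos by (auto simp: \<epsilon>_def)

lemma mult_eps_le_1: "m \<le> 3 * k \<Longrightarrow> m * \<epsilon> \<le> 1"
  by (simp add: \<epsilon>_def field_simps)

sublocale adversary_packing \<epsilon> "3 * k" bin
proof
  show "0 < \<epsilon>" "\<epsilon> < 1"
    by (fact eps_pos eps_less_1)+
  show "valid_packing (adversary_input \<epsilon> (3 * k)) bin"
    using online valid_input_adversary_input[OF eps_pos eps_less_1]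
    unfolding is_online_alg_def bin_def by blast
qed

lemma ALG_adversary_prefix:
  "m \<le> 3 * k \<Longrightarrow> ALG A (adversary_input \<epsilon> m) = card (bin ` {..<m})"
  using ALG_take[of m "adversary_input \<epsilon> (3 * k)" A] by (simp add: take_adversary_input bin_def)

lemma abs_comp_ratio_ge_2_if_unpaired:
  assumes "j < k" "pairs_combined bin j" "bin (3 * j) \<noteq> bin (3 * j + 1)"
  shows "ereal 2 \<le> abs_comp_ratio A"
proof (rule abs_comp_ratio_ge)
  let ?ys = "adversary_input \<epsilon> (3 * j + 2)"
  show "valid_input ?ys" "?ys \<noteq> []"
    using valid_input_adversary_input[OF eps_pos eps_less_1] by simp_all
  have "OPT ?ys \<le> j + 1"
    using OPT_adversary_input_le[OF eps_pos eps_less_1 mult_eps_le_1[of "3 * j + 2"]] assms(1)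
    by simp
  moreover have "2 * j + 2 \<le> ALG A ?ys"
    using unpaired_triple_opens_two_bins assms ALG_adversary_prefix by simp
  ultimately have "2 * OPT ?ys \<le> ALG A ?ys"
    by linarith
  then show "2 * real (OPT ?ys) \<le> ALG A ?ys"
    by simp
qed

lemma abs_comp_ratio_ge_if_all_paired:
  assumes "pairs_combined bin k"
  shows "ereal (2 * real k / (real k + 1)) \<le> abs_comp_ratio A"
proof (rule abs_comp_ratio_ge)
  show "valid_input xs" "xs \<noteq> []"
    using valid_input_xs k_pos by simp_all
  have "OPT xs \<le> k + 1"
    using OPT_adversary_input_le[OF eps_pos eps_less_1 mult_eps_le_1[of "3 * k"]] by simp
  then have "2 * real k / (real k + 1) * OPT xs \<le> 2 * real k / (real k + 1) * (real k + 1)"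
    by (intro mult_left_mono) auto
  also have "\<dots> = 2 * k"
    by simp
  also have "2 * k \<le> ALG A xs"
    using paired_prefix_card_bins[of k] assms ALG_adversary_prefix[of "3 * k"] by simp
  finally show "2 * real k / (real k + 1) * OPT xs \<le> ALG A xs"
    by simp
qed

end

lemma abs_comp_ratio_ge_2k_over_k_plus_1:
  assumes "is_online_alg A" "1 \<le> k"
  shows "ereal (2 * real k / (real k + 1)) \<le> abs_comp_ratio A"
proof -
  interpret online_adversary A k
    using assms by unfold_locales
  show ?thesis
  proof (cases "pairs_combined bin k")
    case True
    then show ?thesis
      by (rule abs_comp_ratio_ge_if_all_paired)
  next
    case False
    then obtain j where "j < k" "pairs_combined bin j" "bin (3 * j) \<noteq> bin (3 * j + 1)"
      using first_uncombined_pair by blast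
    then have "ereal 2 \<le> abs_comp_ratio A"
      by (rule abs_comp_ratio_ge_2_if_unpaired)
    moreover have "2 * real k / (real k + 1) \<le> 2"
      by (simp add: divide_le_eq)
    ultimately show ?thesis
      by (simp add: order_trans[rotated])
  qed
qed

theorem mainTheorem4:
  assumes "is_online_alg A"
  shows "abs_comp_ratio A \<ge> 2"
proof -
  have "(\<lambda>k. 2 * real k / (real k + 1)) \<longlonglongrightarrow> 2"
    using tendsto_mult_left[OF LIMSEQ_n_over_Suc_n, of 2] by (simp add: add.commute)
  then have "(\<lambda>k. ereal (2 * real k / (real k + 1))) \<longlonglongrightarrow> ereal 2"
    by (rule tendsto_ereal)
  moreover have "\<exists>N. \<forall>k\<ge>N. ereal (2 * real k / (real k + 1)) \<le> abs_comp_ratio A"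
    using abs_comp_ratio_ge_2k_over_k_plus_1[OF assms] by (intro exI[of _ 1]) simp
  ultimately have "ereal 2 \<le> abs_comp_ratio A"
    by (rule LIMSEQ_le_const2)
  then show ?thesis
    by simp
qed

end
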